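(* Let $\mathcal D$ be a finite doset on a poset $\mathcal P$ which has a unique minimal element $\alpha_0$, and let $A$ be an algebra with straightening law on $\mathcal D$. Write $A=\mathbb{C}[\mathcal D]/J$, where $\mathbb{C}[\mathcal D]$ is the polynomial ring in variables $x_{(\alpha,\beta)}$, $(\alpha,\beta)\in\mathcal D$, and $J$ is the kernel of the surjection $x_{(\alpha,\beta)}\mapsto p_{(\alpha,\beta)}$. Then $J$ is saturated: if $f\in\mathbb{C}[\mathcal D]$ and $N\in\mathbb{N}$ satisfy $x^N f\in J$ for every variable $x$, then $f\in J$.
   Context: A doset on a poset $\mathcal P$ is a set $\mathcal D$ with $\Delta_{\mathcal P}\subseteq\mathcal D\subseteq\{(\alpha,\beta)\in\mathcal P\times\mathcal P\mid\alpha\le\beta\}$ ($\Delta_{\mathcal P}$ the diagonal) such that whenever $\alpha\le\beta\le\gamma$, $(\alpha,\gamma)\in\mathcal D$ iff both $(\alpha,\beta)\in\mathcal D$ and $(\beta,\gamma)\in\mathcal D$; it is ordered by $(\alpha,\beta)\le(\gamma,\delta)$ iff $\beta\le\gamma$; one writes $\alpha$ for $(\alpha,\alpha)$. A monomial $p_{(\alpha_1,\beta_1)}\cdots p_{(\alpha_k,\beta_k)}$ is standard if $\alpha_1\le\beta_1\le\alpha_2\le\dots\le\alpha_k\le\beta_k$. A graded $\mathbb{C}$-algebra $A=\bigoplus_{q\ge0}A_q$ is an algebra with straightening law on $\mathcal D$ if there is an injection $\mathcal D\ni(\alpha,\beta)\mapsto p_{(\alpha,\beta)}\in A_1$ such that: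 (1) the $p_{(\alpha,\beta)}$ generate $A$; (2) the standard monomials form a $\mathbb{C}$-basis of $A$; (3) if a monomial $p_{(\alpha_1,\beta_1)}\cdots p_{(\alpha_k,\beta_k)}$ (factors ordered so that the sequence $\alpha_1,\beta_1,\dots,\alpha_k,\beta_k$ is the one being compared) equals $\sum_j c_j p_{(\alpha_{j1},\beta_{j1})}\cdots p_{(\alpha_{jk},\beta_{jk})}$ as a combination of distinct standard monomials, then each sequence $(\alpha_{j1},\beta_{j1},\dots,\alpha_{jk},\beta_{jk})$ is lexicographically smaller than $(\alpha_1,\beta_1,\dots,\alpha_k,\beta_k)$ (at the first differing position the new entry is smaller); (4) if $\alpha_1\le\alpha_2\le\alpha_3\le\alpha_4$ and for some permutation $\sigma\in S_4$ both $(\alpha_{\sigma(1)},\alpha_{\sigma(2)})$ and $(\alpha_{\sigma(3)},\alpha_{\sigma(4)})$ lie in $\mathcal D$, then $p_{(\alpha_{\sigma(1)},\alpha_{\sigma(2)})}p_{(\alpha_{\sigma(3)},\alpha_{\sigma(4)})}=\pm p_{(\alpha_1,\alpha_2)}p_{(\alpha_3,\alpha_4)}+\sum_i r_i m_i$ with the $m_i$ quadratic standard monomials distinct from $p_{(\alpha_1,\alpha_2)}p_{(\alpha_3,\alpha_4)}$. *)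

theory Defs
  imports Complex_Main "HOL-Library.Poly_Mapping" "HOL-Combinatorics.Permutations"
begin

definition is_doset :: "'p::order set \<Rightarrow> ('p \<times> 'p) set \<Rightarrow> bool" where
  "is_doset P D \<longleftrightarrow>
     (\<forall>a\<in>P. (a, a) \<in> D) \<and>
     D \<subseteq> {(a, b). a \<in> P \<and> b \<in> P \<and> a \<le> b} \<and>
     (\<forall>a\<in>P. \<forall>b\<in>P. \<forall>c\<in>P. a \<le> b \<and> b \<le> c \<longrightarrow>
        ((a, c) \<in> D \<longleftrightarrow> (a, b) \<in> D \<and> (b, c) \<in> D))"

definition minimal_in :: "'p::order set \<Rightarrow> 'p \<Rightarrow> bool" where
  "minimal_in P a \<longleftrightarrow> a \<in> P \<and> (\<forall>b\<in>P. b \<le> a \<longrightarrow> b = a)"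

definition flat_seq :: "('p \<times> 'p) list \<Rightarrow> 'p list" where
  "flat_seq xs = concat (map (\<lambda>(a, b). [a, b]) xs)"

definition standard :: "('p::order \<times> 'p) set \<Rightarrow> ('p \<times> 'p) list \<Rightarrow> bool" where
  "standard D xs \<longleftrightarrow> set xs \<subseteq> D \<and> successively (\<le>) (flat_seq xs)"

definition lex_less :: "'p::order list \<Rightarrow> 'p list \<Rightarrow> bool" where
  "lex_less xs ys \<longleftrightarrow>
     (\<exists>i. i < length xs \<and> i < length ys \<and> take i xs = take i ys \<and> xs ! i < ys ! i)"

definition monom :: "('v \<Rightarrow> 'a::comm_ring_1) \<Rightarrow> 'v list \<Rightarrow> 'a" where
  "monom p xs = prod_list (map p xs)"

definition lincomb ::
  "(complex \<Rightarrow> 'a::comm_ring_1) \<Rightarrow> ('v \<Rightarrow> 'a) \<Rightarrow> ('v list \<Rightarrow> complex) \<Rightarrow> 'a" where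
  "lincomb emb p c = (\<Sum>s\<in>{s. c s \<noteq> 0}. emb (c s) * monom p s)"

definition std_coeffs :: "('p::order \<times> 'p) set \<Rightarrow> (('p \<times> 'p) list \<Rightarrow> complex) \<Rightarrow> bool" where
  "std_coeffs D c \<longleftrightarrow> finite {s. c s \<noteq> 0} \<and> (\<forall>s. c s \<noteq> 0 \<longrightarrow> standard D s)"

text \<open>A commutative ring 'a together with a ring homomorphism emb from the complex numbers
  is a (commutative, unital) complex algebra; G q is the degree-q component.\<close>
definition complex_alg :: "(complex \<Rightarrow> 'a::comm_ring_1) \<Rightarrow> bool" where
  "complex_alg emb \<longleftrightarrow> emb 1 = 1 \<and> (\<forall>x y. emb (x + y) = emb x + emb y)
      \<and> (\<forall>x y. emb (x * y) = emb x * emb y)"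

definition graded :: "(complex \<Rightarrow> 'a::comm_ring_1) \<Rightarrow> (nat \<Rightarrow> 'a set) \<Rightarrow> bool" where
  "graded emb G \<longleftrightarrow>
     (\<forall>q. 0 \<in> G q \<and> (\<forall>x\<in>G q. \<forall>y\<in>G q. x + y \<in> G q) \<and> (\<forall>c. \<forall>x\<in>G q. emb c * x \<in> G q)) \<and>
     (\<forall>q r. \<forall>x\<in>G q. \<forall>y\<in>G r. x * y \<in> G (q + r)) \<and>
     (\<forall>a. \<exists>!f. finite {q. f q \<noteq> 0} \<and> (\<forall>q. f q \<in> G q) \<and> a = (\<Sum>q\<in>{q. f q \<noteq> 0}. f q))"

type_synonym 'v cpoly = "('v \<Rightarrow>\<^sub>0 nat) \<Rightarrow>\<^sub>0 complex"

definition polys_in :: "'v set \<Rightarrow> 'v cpoly set" where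
  "polys_in V = {f::'v cpoly. \<forall>m\<in>Poly_Mapping.keys f. Poly_Mapping.keys m \<subseteq> V}"

definition var :: "'v \<Rightarrow> 'v cpoly" where
  "var v = Poly_Mapping.single (Poly_Mapping.single v 1) 1"

definition peval :: "(complex \<Rightarrow> 'a::comm_ring_1) \<Rightarrow> ('v \<Rightarrow> 'a) \<Rightarrow> 'v cpoly \<Rightarrow> 'a" where
  "peval emb p f = (\<Sum>m\<in>Poly_Mapping.keys f. emb (Poly_Mapping.lookup f m) * (\<Prod>v\<in>Poly_Mapping.keys m. p v ^ Poly_Mapping.lookup m v))"

definition ASL ::
  "'p::order set \<Rightarrow> ('p \<times> 'p) set \<Rightarrow> (complex \<Rightarrow> 'a::comm_ring_1) \<Rightarrow> (nat \<Rightarrow> 'a set)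
     \<Rightarrow> ('p \<times> 'p \<Rightarrow> 'a) \<Rightarrow> bool" where
  "ASL P D emb G p \<longleftrightarrow>
     complex_alg emb \<and> graded emb G \<and>
     inj_on p D \<and> (\<forall>x\<in>D. p x \<in> G 1) \<and>
     \<comment> \<open>(1) generation\<close>
     (\<forall>a. \<exists>f\<in>polys_in D. peval emb p f = a) \<and>
     \<comment> \<open>(2) standard monomials form a basis\<close>
     (\<forall>a. \<exists>!c. std_coeffs D c \<and> a = lincomb emb p c) \<and>
     \<comment> \<open>(3) straightening is lexicographically decreasing\<close>
     (\<forall>xs c. set xs \<subseteq> D \<and> \<not> standard D xs \<and> std_coeffs D c \<and>
        (\<forall>s. c s \<noteq> 0 \<longrightarrow> length s = length xs) \<and> monom p xs = lincomb emb p c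
        \<longrightarrow> (\<forall>s. c s \<noteq> 0 \<longrightarrow> lex_less (flat_seq s) (flat_seq xs))) \<and>
     \<comment> \<open>(4) quadratic relations\<close>
     (\<forall>(\<alpha>::nat \<Rightarrow> 'p) \<sigma>. (\<forall>i<4. \<alpha> i \<in> P) \<and> \<alpha> 0 \<le> \<alpha> 1 \<and> \<alpha> 1 \<le> \<alpha> 2 \<and> \<alpha> 2 \<le> \<alpha> 3 \<and>
        \<sigma> permutes {0..<4} \<and> (\<alpha> (\<sigma> 0), \<alpha> (\<sigma> 1)) \<in> D \<and> (\<alpha> (\<sigma> 2), \<alpha> (\<sigma> 3)) \<in> D
        \<longrightarrow> (\<alpha> 0, \<alpha> 1) \<in> D \<and> (\<alpha> 2, \<alpha> 3) \<in> D \<and>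
            (\<exists>\<epsilon> r. (\<epsilon> = 1 \<or> \<epsilon> = -1) \<and> std_coeffs D r \<and>
               (\<forall>s. r s \<noteq> 0 \<longrightarrow> length s = 2) \<and> r [(\<alpha> 0, \<alpha> 1), (\<alpha> 2, \<alpha> 3)] = 0 \<and>
               p (\<alpha> (\<sigma> 0), \<alpha> (\<sigma> 1)) * p (\<alpha> (\<sigma> 2), \<alpha> (\<sigma> 3)) =
                 emb \<epsilon> * (p (\<alpha> 0, \<alpha> 1) * p (\<alpha> 2, \<alpha> 3)) + lincomb emb p r))"

end

theory Submission imports Defs begin

text \<open>Since \<open>\<alpha>\<^sub>0\<close> is the least element of \<open>\<P>\<close>, prepending \<open>(\<alpha>\<^sub>0,\<alpha>\<^sub>0)\<close> to a standard
  monomial yields again a standard monomial, and distinct monomials stay distinct. Hence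
  multiplication by \<open>p\<^sub>\<alpha>\<^sub>0\<close> maps the standard basis injectively into itself, so \<open>p\<^sub>\<alpha>\<^sub>0\<close> is a
  non-zero-divisor of \<open>A\<close>. Evaluating \<open>x\<^sub>\<alpha>\<^sub>0\<^sup>N f \<in> J\<close> gives \<open>p\<^sub>\<alpha>\<^sub>0\<^sup>N \<cdot> f(p) = 0\<close>, whence
  \<open>f(p) = 0\<close>, i.e. \<open>f \<in> J\<close>.\<close>

definition eval_monomial :: "('v \<Rightarrow> 'a::comm_ring_1) \<Rightarrow> ('v \<Rightarrow>\<^sub>0 nat) \<Rightarrow> 'a" where
  "eval_monomial p m = (\<Prod>v\<in>Poly_Mapping.keys m. p v ^ Poly_Mapping.lookup m v)"

lemma complex_alg_emb_0: "complex_alg emb \<Longrightarrow> emb 0 = 0"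
  unfolding complex_alg_def by (metis add_cancel_right_right)

lemma peval_eq_sum_superset:
  assumes "complex_alg emb" "finite S" "Poly_Mapping.keys f \<subseteq> S"
  shows "peval emb p f = (\<Sum>m\<in>S. emb (Poly_Mapping.lookup f m) * eval_monomial p m)"
  unfolding peval_def eval_monomial_def
  by (rule sum.mono_neutral_left[OF assms(2,3)])
     (simp add: in_keys_iff complex_alg_emb_0[OF assms(1)])

lemma peval_add:
  assumes "complex_alg emb"
  shows "peval emb p (f + g) = peval emb p f + peval emb p g"
proof -
  let ?S = "Poly_Mapping.keys f \<union> Poly_Mapping.keys g"
  have "peval emb p (f + g) = (\<Sum>m\<in>?S. emb (Poly_Mapping.lookup (f + g) m) * eval_monomial p m)"
    by (rule peval_eq_sum_superset[OF assms]) (auto simp: keys_add)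
  also have "\<dots> = (\<Sum>m\<in>?S. emb (Poly_Mapping.lookup f m) * eval_monomial p m)
                + (\<Sum>m\<in>?S. emb (Poly_Mapping.lookup g m) * eval_monomial p m)"
    using assms unfolding complex_alg_def by (simp add: lookup_add distrib_right sum.distrib)
  also have "\<dots> = peval emb p f + peval emb p g"
    by (subst (1 2) peval_eq_sum_superset[OF assms]) auto
  finally show ?thesis .
qed

lemma peval_sum:
  assumes "complex_alg emb"
  shows "peval emb p (\<Sum>k\<in>K. g k) = (\<Sum>k\<in>K. peval emb p (g k))"
proof (induction K rule: infinite_finite_induct)
  case (insert k K)
  then show ?case by (simp add: peval_add[OF assms])
qed (simp_all add: peval_def)

lemma peval_single:
  assumes "complex_alg emb"
  shows "peval emb p (Poly_Mapping.single m c) = emb c * eval_monomial p m"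
  by (subst peval_eq_sum_superset[OF assms, of "{m}"]) auto

lemma eval_monomial_add: "eval_monomial p (m + k) = eval_monomial p m * eval_monomial p k"
proof -
  let ?S = "Poly_Mapping.keys m \<union> Poly_Mapping.keys k"
  have on_S: "eval_monomial p q = (\<Prod>v\<in>?S. p v ^ Poly_Mapping.lookup q v)"
    if "Poly_Mapping.keys q \<subseteq> ?S" for q
    unfolding eval_monomial_def
    by (rule prod.mono_neutral_left) (use that in \<open>auto simp: in_keys_iff\<close>)
  have "eval_monomial p (m + k) = (\<Prod>v\<in>?S. p v ^ Poly_Mapping.lookup (m + k) v)"
    by (rule on_S) (auto simp: keys_add)
  also have "\<dots> = (\<Prod>v\<in>?S. p v ^ Poly_Mapping.lookup m v) * (\<Prod>v\<in>?S. p v ^ Poly_Mapping.lookup k v)"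
    by (simp add: lookup_add power_add prod.distrib)
  also have "\<dots> = eval_monomial p m * eval_monomial p k"
    by (subst (1 2) on_S) auto
  finally show ?thesis .
qed

lemma poly_mapping_sum_single:
  "f = (\<Sum>m\<in>Poly_Mapping.keys f. Poly_Mapping.single m (Poly_Mapping.lookup f m))"
  by (rule poly_mapping_eqI) (auto simp: lookup_sum lookup_single when_def in_keys_iff)

lemma var_power: "var x ^ N = Poly_Mapping.single (Poly_Mapping.single x N) 1"
proof (induction N)
  case 0
  then show ?case by (simp add: var_def)
next
  case (Suc N)
  have "Poly_Mapping.single x 1 + Poly_Mapping.single x N = Poly_Mapping.single x (Suc N)"
    by (simp add: single_add[symmetric])
  with Suc show ?case by (simp add: var_def mult_single)
qed

lemma peval_var_power_mult:
  assumes "complex_alg emb"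
  shows "peval emb p (var x ^ N * f) = p x ^ N * peval emb p f"
proof -
  let ?m = "Poly_Mapping.single x N"
  have "var x ^ N * f
      = (\<Sum>k\<in>Poly_Mapping.keys f. Poly_Mapping.single (?m + k) (Poly_Mapping.lookup f k))"
    by (subst poly_mapping_sum_single[of f])
       (simp add: var_power sum_distrib_left mult_single)
  then have "peval emb p (var x ^ N * f)
      = (\<Sum>k\<in>Poly_Mapping.keys f. emb (Poly_Mapping.lookup f k)
                                   * (eval_monomial p ?m * eval_monomial p k))"
    by (simp add: peval_sum[OF assms] peval_single[OF assms] eval_monomial_add)
  also have "\<dots> = eval_monomial p ?m * peval emb p f"
    unfolding peval_def eval_monomial_def[of p] sum_distrib_left
    by (rule sum.cong) (simp_all add: mult_ac)
  also have "eval_monomial p ?m = p x ^ N"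
    by (simp add: eval_monomial_def)
  finally show ?thesis .
qed

lemma doset_diag_mem: "is_doset P D \<Longrightarrow> a \<in> P \<Longrightarrow> (a, a) \<in> D"
  unfolding is_doset_def by (elim conjE) blast

lemma doset_fst_mem: "is_doset P D \<Longrightarrow> (a, b) \<in> D \<Longrightarrow> a \<in> P"
  unfolding is_doset_def by (elim conjE) blast

lemma finite_doset_base: "is_doset P D \<Longrightarrow> finite D \<Longrightarrow> finite P"
  by (erule finite_surj[of D _ fst]) (auto intro: rev_image_eqI dest: doset_diag_mem)

lemma unique_minimal_le:
  assumes "finite P" "\<exists>!\<alpha>0. minimal_in P \<alpha>0" "minimal_in P a0" "b \<in> P"
  shows "a0 \<le> b"
proof -
  obtain m where m: "m \<in> P" "m \<le> b" "\<forall>c\<in>P. c \<le> m \<longrightarrow> m = c"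
    using finite_has_minimal2[OF assms(1,4)] by blast
  then have "minimal_in P m"
    unfolding minimal_in_def by auto
  with assms(2,3) have "m = a0" by blast
  with m show ?thesis by simp
qed

definition prepend_coeffs :: "'v \<Rightarrow> ('v list \<Rightarrow> complex) \<Rightarrow> 'v list \<Rightarrow> complex" where
  "prepend_coeffs x c t = (case t of [] \<Rightarrow> 0 | y # s \<Rightarrow> if y = x then c s else 0)"

lemma prepend_coeffs_support: "{t. prepend_coeffs x c t \<noteq> 0} = Cons x ` {s. c s \<noteq> 0}"
proof (rule set_eqI)
  show "t \<in> {t. prepend_coeffs x c t \<noteq> 0} \<longleftrightarrow> t \<in> Cons x ` {s. c s \<noteq> 0}" for t
    by (cases t) (auto simp: prepend_coeffs_def image_iff)
qed

lemma lincomb_prepend_coeffs: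
  "lincomb emb p (prepend_coeffs x c) = p x * lincomb emb p c"
proof -
  have "lincomb emb p (prepend_coeffs x c)
      = (\<Sum>s\<in>{s. c s \<noteq> 0}. emb (prepend_coeffs x c (x # s)) * monom p (x # s))"
    unfolding lincomb_def prepend_coeffs_support by (subst sum.reindex) (auto simp: inj_on_def)
  also have "\<dots> = (\<Sum>s\<in>{s. c s \<noteq> 0}. p x * (emb (c s) * monom p s))"
    by (rule sum.cong) (simp_all add: prepend_coeffs_def monom_def mult_ac)
  finally show ?thesis
    by (simp add: lincomb_def sum_distrib_left)
qed

lemma standard_Cons_least:
  assumes "is_doset P D" "a \<in> P" "\<forall>b\<in>P. a \<le> b" "standard D s"
  shows "standard D ((a, a) # s)"
proof -
  have "successively (\<le>) (a # a # flat_seq s)"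
  proof (cases s)
    case Nil
    then show ?thesis by (simp add: flat_seq_def)
  next
    case (Cons y ys)
    obtain u v where y: "y = (u, v)" by force
    with Cons assms(4) have "u \<in> P"
      unfolding standard_def by (auto intro: doset_fst_mem[OF assms(1)])
    with assms(3) Cons y assms(4) show ?thesis
      by (simp add: standard_def flat_seq_def)
  qed
  with assms(1,2,4) show ?thesis
    unfolding standard_def flat_seq_def by (simp add: doset_diag_mem)
qed

lemma std_coeffs_prepend_least:
  assumes "is_doset P D" "a \<in> P" "\<forall>b\<in>P. a \<le> b" "std_coeffs D c"
  shows "std_coeffs D (prepend_coeffs (a, a) c)"
proof -
  have "finite {t. prepend_coeffs (a, a) c t \<noteq> 0}"
    using assms(4) by (simp add: std_coeffs_def prepend_coeffs_support)
  moreover have "standard D t" if "prepend_coeffs (a, a) c t \<noteq> 0" for t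
  proof -
    from that obtain s where "t = (a, a) # s" "c s \<noteq> 0"
      using prepend_coeffs_support[of "(a, a)" c] by blast
    with assms(4) standard_Cons_least[OF assms(1-3)] show ?thesis
      unfolding std_coeffs_def by blast
  qed
  ultimately show ?thesis
    unfolding std_coeffs_def by blast
qed

lemma ASL_complex_alg: "ASL P D emb G p \<Longrightarrow> complex_alg emb"
  by (simp add: ASL_def)

lemma ASL_std_coeffs_unique:
  "ASL P D emb G p \<Longrightarrow> \<exists>!c. std_coeffs D c \<and> a = lincomb emb p c"
  by (simp add: ASL_def)

lemma ASL_lincomb_eq_0_iff:
  assumes "ASL P D emb G p" "std_coeffs D c"
  shows "lincomb emb p c = 0 \<longleftrightarrow> c = (\<lambda>_. 0)"
proof
  have zero: "std_coeffs D (\<lambda>_. 0)" "0 = lincomb emb p (\<lambda>_. 0)"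
    by (simp_all add: std_coeffs_def lincomb_def)
  assume "lincomb emb p c = 0"
  with assms(2) have "std_coeffs D c \<and> 0 = lincomb emb p c" by simp
  with zero ASL_std_coeffs_unique[OF assms(1)] show "c = (\<lambda>_. 0)"
    by blast
qed (simp add: lincomb_def)

lemma ASL_least_mult_eq_0:
  assumes "is_doset P D" "ASL P D emb G p" "a \<in> P" "\<forall>b\<in>P. a \<le> b"
    and "p (a, a) * x = 0"
  shows "x = 0"
proof -
  obtain c where c: "std_coeffs D c" "x = lincomb emb p c"
    using ASL_std_coeffs_unique[OF assms(2)] by blast
  have "lincomb emb p (prepend_coeffs (a, a) c) = 0"
    using assms(5) c(2) by (simp add: lincomb_prepend_coeffs)
  then have "prepend_coeffs (a, a) c = (\<lambda>_. 0)"
    using ASL_lincomb_eq_0_iff[OF assms(2) std_coeffs_prepend_least[OF assms(1,3,4) c(1)]] by blast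
  then have "c = (\<lambda>_. 0)"
    by (intro ext) (drule fun_cong[where x = "(a, a) # _"], simp add: prepend_coeffs_def)
  with c ASL_lincomb_eq_0_iff[OF assms(2)] show ?thesis by blast
qed

lemma ASL_least_power_mult_eq_0:
  assumes "is_doset P D" "ASL P D emb G p" "a \<in> P" "\<forall>b\<in>P. a \<le> b"
    and "p (a, a) ^ N * x = 0"
  shows "x = 0"
  using assms(5)
proof (induction N)
  case (Suc N)
  then show ?case
    using ASL_least_mult_eq_0[OF assms(1-4)] by (simp add: mult.assoc)
qed simp

theorem theorem3p7:
  fixes P :: "'p::order set" and D :: "('p \<times> 'p) set"
    and emb :: "complex \<Rightarrow> 'a::comm_ring_1" and G :: "nat \<Rightarrow> 'a set"
    and p :: "'p \<times> 'p \<Rightarrow> 'a"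
  assumes "is_doset P D" and "finite D"
    and "\<exists>!\<alpha>0. minimal_in P \<alpha>0"
    and "ASL P D emb G p"
    and "f \<in> polys_in D"
    and "\<forall>x\<in>D. peval emb p (var x ^ N * f) = 0"
  shows "peval emb p f = 0"
proof -
  obtain a0 where a0: "minimal_in P a0"
    using assms(3) by blast
  then have a0P: "a0 \<in> P"
    unfolding minimal_in_def by blast
  have least: "\<forall>b\<in>P. a0 \<le> b"
    using unique_minimal_le[OF finite_doset_base[OF assms(1,2)] assms(3) a0] by blast
  have "complex_alg emb"
    using assms(4) by (rule ASL_complex_alg)
  moreover have "peval emb p (var (a0, a0) ^ N * f) = 0"
    using assms(6) doset_diag_mem[OF assms(1) a0P] by blast
  ultimately have "p (a0, a0) ^ N * peval emb p f = 0"
    by (simp add: peval_var_power_mult)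
  then show ?thesis
    by (rule ASL_least_power_mult_eq_0[OF assms(1,4) a0P least])
qed

end
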